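(* Let $P$ be a continuous poset, $U\subseteq P$ an up-set and $D\subseteq P$ a down-set. Then (i) $k[U]$ is lower semi-continuous iff $U$ is Scott-open; (ii) $k[D]$ is lower semi-continuous iff $D$ is Scott-closed. For $P=\mathbb R^n$ with componentwise order one also has: (iii) $k[U]$ is upper semi-continuous iff $U$ is closed in the standard topology; (iv) $k[D]$ is upper semi-continuous iff $D$ is open in the standard topology.
   Context: Let $P$ be a poset. A subset is directed if nonempty and any two elements have an upper bound in it. $x\ll y$ means: for every directed $D$ whose supremum exists with $y\le\sup D$, some $d\in D$ satisfies $x\le d$. $P$ is continuous if for each $p$ the set $\{x:x\ll p\}$ is directed with supremum $p$. A set $U$ is Scott-open if it is an up-set meeting every directed set whose supremum exists and lies in $U$; Scott-closed sets are complements of Scott-open sets. $k$ is a commutative ring with unity; persistence modules are functors from $P$ (as a category) to $k$-modules. For convex $I\subseteq P$, $k[I]$ is the indicator module: $k$ on $I$, $0$ elsewhere, identity maps within $I$, zero otherwise. $\underline M_p=\varprojlim_{x\gg p}M_x$, $\overline M_p=\varinjlim_{x\ll p}M_x$; $M$ is upper (resp. lower) semi-continuous if the canonical morphism $M\to\underline M$ (resp. $\overline M\to M$) is an isomorphism. *)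

theory Defs
  imports "HOL-Analysis.Analysis" "HOL-Algebra.Module"
begin

section \<open>Order-theoretic notions (the poset P is the whole type 'a)\<close>

definition directed :: "'a::ord set \<Rightarrow> bool" where
  "directed D \<longleftrightarrow> D \<noteq> {} \<and> (\<forall>x\<in>D. \<forall>y\<in>D. \<exists>z\<in>D. x \<le> z \<and> y \<le> z)"

definition is_sup :: "'a::ord set \<Rightarrow> 'a \<Rightarrow> bool" where
  "is_sup S s \<longleftrightarrow> (\<forall>d\<in>S. d \<le> s) \<and> (\<forall>u. (\<forall>d\<in>S. d \<le> u) \<longrightarrow> s \<le> u)"

definition way_below :: "'a::ord \<Rightarrow> 'a \<Rightarrow> bool" (infix "\<lless>" 50) where
  "x \<lless> y \<longleftrightarrow> (\<forall>D s. directed D \<and> is_sup D s \<and> y \<le> s \<longrightarrow> (\<exists>d\<in>D. x \<le> d))"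

definition continuous_poset :: "'a::ord itself \<Rightarrow> bool" where
  "continuous_poset (_::'a itself) \<longleftrightarrow>
     (\<forall>p::'a. directed {x. x \<lless> p} \<and> is_sup {x. x \<lless> p} p)"

definition up_set :: "'a::ord set \<Rightarrow> bool" where
  "up_set U \<longleftrightarrow> (\<forall>x y. x \<in> U \<and> x \<le> y \<longrightarrow> y \<in> U)"

definition down_set :: "'a::ord set \<Rightarrow> bool" where
  "down_set D \<longleftrightarrow> (\<forall>x y. y \<in> D \<and> x \<le> y \<longrightarrow> x \<in> D)"

definition scott_open :: "'a::ord set \<Rightarrow> bool" where
  "scott_open U \<longleftrightarrow> up_set U \<and>
     (\<forall>D s. directed D \<and> is_sup D s \<and> s \<in> U \<longrightarrow> D \<inter> U \<noteq> {})"

definition scott_closed :: "'a::ord set \<Rightarrow> bool" where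
  "scott_closed C \<longleftrightarrow> scott_open (- C)"

definition persistence_module ::
  "('k, 'k) ring_scheme \<Rightarrow> ('a::ord \<Rightarrow> ('k, 'm) module) \<Rightarrow> ('a \<Rightarrow> 'a \<Rightarrow> 'm \<Rightarrow> 'm) \<Rightarrow> bool" where
  "persistence_module k M F \<longleftrightarrow>
     (\<forall>x. module k (M x)) \<and>
     (\<forall>x y. x \<le> y \<longrightarrow> F x y \<in> carrier (M x) \<rightarrow> carrier (M y)) \<and>
     (\<forall>x y. x \<le> y \<longrightarrow> (\<forall>a\<in>carrier (M x). \<forall>b\<in>carrier (M x).
          F x y (a \<oplus>\<^bsub>M x\<^esub> b) = F x y a \<oplus>\<^bsub>M y\<^esub> F x y b)) \<and>
     (\<forall>x y. x \<le> y \<longrightarrow> (\<forall>r\<in>carrier k. \<forall>a\<in>carrier (M x).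
          F x y (r \<odot>\<^bsub>M x\<^esub> a) = r \<odot>\<^bsub>M y\<^esub> F x y a)) \<and>
     (\<forall>x. \<forall>a\<in>carrier (M x). F x x a = a) \<and>
     (\<forall>x y z. x \<le> y \<and> y \<le> z \<longrightarrow> (\<forall>a\<in>carrier (M x). F y z (F x y a) = F x z a))"

definition ring_module :: "('k, 'b) ring_scheme \<Rightarrow> ('k, 'k) module" where
  "ring_module k = \<lparr>carrier = carrier k, mult = mult k, one = one k, zero = zero k,
                     add = add k, smult = mult k\<rparr>"

definition zero_module :: "('k, 'b) ring_scheme \<Rightarrow> ('k, 'k) module" where
  "zero_module k = (ring_module k)\<lparr>carrier := {\<zero>\<^bsub>k\<^esub>}\<rparr>"

definition indicator_module :: "('k, 'b) ring_scheme \<Rightarrow> 'a set \<Rightarrow> 'a \<Rightarrow> ('k, 'k) module" where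
  "indicator_module k I x = (if x \<in> I then ring_module k else zero_module k)"

definition indicator_map :: "('k, 'b) ring_scheme \<Rightarrow> 'a set \<Rightarrow> 'a \<Rightarrow> 'a \<Rightarrow> 'k \<Rightarrow> 'k" where
  "indicator_map k I x y = (if x \<in> I \<and> y \<in> I then (\<lambda>m. m) else (\<lambda>m. \<zero>\<^bsub>k\<^esub>))"

text \<open>Underlying set of the inverse limit lim_{x \<gg> p} M_x (compatible families,
  normalised to undefined off the index set) and the canonical map M_p \<rightarrow> lim.\<close>
definition upper_lim :: "('a::ord \<Rightarrow> ('k, 'm) module) \<Rightarrow> ('a \<Rightarrow> 'a \<Rightarrow> 'm \<Rightarrow> 'm) \<Rightarrow> 'a \<Rightarrow> ('a \<Rightarrow> 'm) set" where
  "upper_lim M F p = {s. (\<forall>x. p \<lless> x \<longrightarrow> s x \<in> carrier (M x)) \<and>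
                         (\<forall>x. \<not> p \<lless> x \<longrightarrow> s x = undefined) \<and>
                         (\<forall>x y. p \<lless> x \<and> p \<lless> y \<and> x \<le> y \<longrightarrow> F x y (s x) = s y)}"

definition upper_canon :: "('a::ord \<Rightarrow> 'a \<Rightarrow> 'm \<Rightarrow> 'm) \<Rightarrow> 'a \<Rightarrow> 'm \<Rightarrow> ('a \<Rightarrow> 'm)" where
  "upper_canon F p m = (\<lambda>x. if p \<lless> x then F p x m else undefined)"

definition upper_semicontinuous ::
  "('a::ord \<Rightarrow> ('k, 'm) module) \<Rightarrow> ('a \<Rightarrow> 'a \<Rightarrow> 'm \<Rightarrow> 'm) \<Rightarrow> bool" where
  "upper_semicontinuous M F \<longleftrightarrow>
     (\<forall>p. bij_betw (upper_canon F p) (carrier (M p)) (upper_lim M F p))"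

text \<open>Underlying set of the (directed) colimit colim_{x \<lless> p} M_x: pairs (x,m) modulo
  (x,m) ~ (y,n) iff they become equal at some common upper bound z \<lless> p;
  and the canonical map colim \<rightarrow> M_p, [(x,m)] \<mapsto> F x p m.\<close>
definition lower_pairs :: "('a::ord \<Rightarrow> ('k, 'm) module) \<Rightarrow> 'a \<Rightarrow> ('a \<times> 'm) set" where
  "lower_pairs M p = {(x, m). x \<lless> p \<and> m \<in> carrier (M x)}"

definition lower_rel :: "('a::ord \<Rightarrow> ('k, 'm) module) \<Rightarrow> ('a \<Rightarrow> 'a \<Rightarrow> 'm \<Rightarrow> 'm) \<Rightarrow> 'a \<Rightarrow> (('a \<times> 'm) \<times> ('a \<times> 'm)) set" where
  "lower_rel M F p = {((x, m), (y, n)). (x, m) \<in> lower_pairs M p \<and> (y, n) \<in> lower_pairs M p \<and>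
      (\<exists>z. z \<lless> p \<and> x \<le> z \<and> y \<le> z \<and> F x z m = F y z n)}"

definition lower_colim :: "('a::ord \<Rightarrow> ('k, 'm) module) \<Rightarrow> ('a \<Rightarrow> 'a \<Rightarrow> 'm \<Rightarrow> 'm) \<Rightarrow> 'a \<Rightarrow> ('a \<times> 'm) set set" where
  "lower_colim M F p = lower_pairs M p // lower_rel M F p"

definition lower_canon :: "('a::ord \<Rightarrow> 'a \<Rightarrow> 'm \<Rightarrow> 'm) \<Rightarrow> 'a \<Rightarrow> ('a \<times> 'm) set \<Rightarrow> 'm" where
  "lower_canon F p C = the_elem ((\<lambda>(x, m). F x p m) ` C)"

definition lower_semicontinuous ::
  "('a::ord \<Rightarrow> ('k, 'm) module) \<Rightarrow> ('a \<Rightarrow> 'a \<Rightarrow> 'm \<Rightarrow> 'm) \<Rightarrow> bool" where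
  "lower_semicontinuous M F \<longleftrightarrow>
     (\<forall>p. bij_betw (lower_canon F p) (lower_colim M F p) (carrier (M p)))"

end

theory Submission
  imports Defs
begin

text \<open>Indicator modules of up- and down-sets are order-convex, so along the directed set
  of points way below p (resp. the filtered set of points way above p) membership in the set
  eventually settles to some truth value b.  The colimit (resp. limit) of the indicator module
  is then k if b holds and 0 otherwise, and the canonical map is an isomorphism exactly when
  p belongs to the set iff b.  For an up-set U and the points way below p, b says that some
  point way below p lies in U, which is Scott-openness at p; the other three cases are
  analogous, using that in R^n the relation x \<lless> y means strict componentwise inequality, so
  that a down-set is open iff each of its points is way below another of its points.\<close>

lemma bij_betw_the_elem_quotient_iff:
  assumes R: "R = {(a, b). a \<in> A \<and> b \<in> A \<and> f a = f b}"
    and G: "\<And>a. a \<in> A \<Longrightarrow> G a = h (f a)"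
  shows "bij_betw (\<lambda>C. the_elem (G ` C)) (A // R) B \<longleftrightarrow> bij_betw h (f ` A) B"
proof -
  have eq_class: "R `` {a} = {b \<in> A. f b = f a}" if "a \<in> A" for a
    using that R by auto
  define \<phi> where "\<phi> C = the_elem (f ` C)" for C
  have \<phi>_class: "\<phi> (R `` {a}) = f a" if "a \<in> A" for a
  proof -
    have "f ` (R `` {a}) = {f a}" using eq_class[OF that] that by auto
    then show ?thesis by (simp add: \<phi>_def)
  qed
  have G_class: "the_elem (G ` (R `` {a})) = h (f a)" if "a \<in> A" for a
  proof -
    have "G ` (R `` {a}) = {h (f a)}" using eq_class[OF that] that G by auto
    then show ?thesis by simp
  qed
  have "bij_betw \<phi> (A // R) (f ` A)"
  proof (rule bij_betw_imageI)
    show "inj_on \<phi> (A // R)"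
    proof (rule inj_onI)
      fix C D assume "C \<in> A // R" "D \<in> A // R" "\<phi> C = \<phi> D"
      then obtain a b where "a \<in> A" "b \<in> A" "C = R `` {a}" "D = R `` {b}" "f a = f b"
        by (auto simp: quotient_def \<phi>_class)
      then show "C = D" using eq_class by auto
    qed
    show "\<phi> ` (A // R) = f ` A"
    proof
      show "\<phi> ` (A // R) \<subseteq> f ` A" by (auto simp: quotient_def \<phi>_class)
      show "f ` A \<subseteq> \<phi> ` (A // R)"
      proof
        fix y assume "y \<in> f ` A"
        then obtain a where "a \<in> A" "y = f a" by auto
        moreover have "R `` {a} \<in> A // R" using \<open>a \<in> A\<close> by (auto simp: quotient_def)
        ultimately show "y \<in> \<phi> ` (A // R)" using \<phi>_class by force
      qed
    qed
  qed
  moreover have "bij_betw (\<lambda>C. the_elem (G ` C)) (A // R) B \<longleftrightarrow> bij_betw (h \<circ> \<phi>) (A // R) B"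
  proof (rule bij_betw_cong)
    fix C assume "C \<in> A // R"
    then obtain a where "a \<in> A" "C = R `` {a}" by (auto simp: quotient_def)
    then show "the_elem (G ` C) = (h \<circ> \<phi>) C" by (simp add: \<phi>_class G_class)
  qed
  ultimately show ?thesis using bij_betw_comp_iff by blast
qed

lemma directed_upper_bound3:
  fixes W :: "'a::order set"
  assumes "directed W" "x \<in> W" "y \<in> W" "w \<in> W"
  obtains z where "z \<in> W" "x \<le> z" "y \<le> z" "w \<le> z"
proof -
  obtain z1 where "z1 \<in> W" "x \<le> z1" "y \<le> z1" using assms by (auto simp: directed_def)
  moreover obtain z where "z \<in> W" "z1 \<le> z" "w \<le> z" using assms \<open>z1 \<in> W\<close> by (auto simp: directed_def)
  ultimately show ?thesis using that by (meson order.trans)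
qed

lemma directed_finite_upper_bound:
  fixes D :: "'a::order set"
  assumes "directed D" "finite F" "F \<subseteq> D"
  shows "\<exists>d\<in>D. \<forall>f\<in>F. f \<le> d"
  using assms(2,3)
proof (induction F rule: finite_induct)
  case empty
  then show ?case using assms(1) by (auto simp: directed_def)
next
  case (insert a F)
  then obtain d where "d \<in> D" "\<forall>f\<in>F. f \<le> d" by auto
  moreover have "a \<in> D" using insert.prems by simp
  moreover obtain z where "z \<in> D" "a \<le> z" "d \<le> z"
    using assms(1) \<open>a \<in> D\<close> \<open>d \<in> D\<close> unfolding directed_def by blast
  ultimately show ?case by (intro bexI[of _ z]) (auto intro: order_trans)
qed

lemma way_below_imp_le:
  fixes x p :: "'a::order"
  assumes "x \<lless> p"
  shows "x \<le> p"
proof -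
  have "directed {p}" "is_sup {p} p" by (auto simp: directed_def is_sup_def)
  then show ?thesis using assms unfolding way_below_def by auto
qed

lemma scott_open_iff_way_below:
  fixes U :: "'a::order set"
  assumes cont: "continuous_poset TYPE('a)" and up: "up_set U"
  shows "scott_open U \<longleftrightarrow> (\<forall>p\<in>U. \<exists>u. u \<lless> p \<and> u \<in> U)"
proof
  assume "scott_open U"
  then show "\<forall>p\<in>U. \<exists>u. u \<lless> p \<and> u \<in> U"
    using cont unfolding scott_open_def continuous_poset_def by blast
next
  assume H: "\<forall>p\<in>U. \<exists>u. u \<lless> p \<and> u \<in> U"
  have "D \<inter> U \<noteq> {}" if D: "directed D" "is_sup D s" and "s \<in> U" for D s
  proof -
    obtain u where "u \<lless> s" "u \<in> U" using H \<open>s \<in> U\<close> by blast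
    then obtain d where "d \<in> D" "u \<le> d" using D unfolding way_below_def by blast
    then show ?thesis using up \<open>u \<in> U\<close> by (auto simp: up_set_def)
  qed
  then show "scott_open U" using up unfolding scott_open_def by blast
qed

definition order_convex :: "'a::ord set \<Rightarrow> bool" where
  "order_convex I \<longleftrightarrow> (\<forall>x y z. x \<in> I \<and> z \<in> I \<and> x \<le> y \<and> y \<le> z \<longrightarrow> y \<in> I)"

lemma up_set_imp_order_convex: "up_set U \<Longrightarrow> order_convex U"
  by (auto simp: up_set_def order_convex_def)

lemma down_set_imp_order_convex: "down_set D \<Longrightarrow> order_convex D"
  by (auto simp: down_set_def order_convex_def)

lemma carrier_indicator_module:
  "carrier (indicator_module k I x) = (if x \<in> I then carrier k else {\<zero>\<^bsub>k\<^esub>})"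
  by (simp add: indicator_module_def ring_module_def zero_module_def)

lemma indicator_map_apply:
  "indicator_map k I x y m = (if x \<in> I \<and> y \<in> I then m else \<zero>\<^bsub>k\<^esub>)"
  by (simp add: indicator_map_def)

lemma indicator_map_comp:
  assumes "order_convex I" "x \<le> y" "y \<le> z"
  shows "indicator_map k I y z (indicator_map k I x y m) = indicator_map k I x z m"
proof -
  have "x \<in> I \<Longrightarrow> z \<in> I \<Longrightarrow> y \<in> I" using assms unfolding order_convex_def by blast
  then show ?thesis by (auto simp: indicator_map_apply)
qed

lemma bij_betw_if_zero_iff:
  assumes "\<zero>\<^bsub>k\<^esub> \<in> carrier k" "\<one>\<^bsub>k\<^esub> \<in> carrier k" "\<one>\<^bsub>k\<^esub> \<noteq> \<zero>\<^bsub>k\<^esub>"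
  shows "bij_betw (\<lambda>m. if a then m else \<zero>\<^bsub>k\<^esub>)
      (if b then carrier k else {\<zero>\<^bsub>k\<^esub>}) (if a then carrier k else {\<zero>\<^bsub>k\<^esub>}) \<longleftrightarrow> (a \<longleftrightarrow> b)"
  using assms by (cases a; cases b) (auto simp: bij_betw_def inj_on_def)

lemma bij_betw_comp_if_zero_iff:
  assumes "\<zero>\<^bsub>k\<^esub> \<in> carrier k" "\<one>\<^bsub>k\<^esub> \<in> carrier k" "\<one>\<^bsub>k\<^esub> \<noteq> \<zero>\<^bsub>k\<^esub>"
    and inj: "inj_on c (if b then carrier k else {\<zero>\<^bsub>k\<^esub>})"
  shows "bij_betw (\<lambda>m. c (if a then m else \<zero>\<^bsub>k\<^esub>))
      (if a then carrier k else {\<zero>\<^bsub>k\<^esub>}) (c ` (if b then carrier k else {\<zero>\<^bsub>k\<^esub>})) \<longleftrightarrow> (a \<longleftrightarrow> b)"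
proof (cases b)
  case True
  then have "c \<one>\<^bsub>k\<^esub> \<noteq> c \<zero>\<^bsub>k\<^esub>" using assms inj_onD[OF inj] by force
  moreover have "c \<one>\<^bsub>k\<^esub> \<in> c ` carrier k" using assms(2) by simp
  ultimately show ?thesis using True inj by (cases a) (auto simp: bij_betw_def inj_on_def)
next
  case False
  then show ?thesis using assms by (cases a) (auto simp: bij_betw_def inj_on_def)
qed

definition lower_semicontinuous_at ::
  "('a::ord \<Rightarrow> ('k, 'm) module) \<Rightarrow> ('a \<Rightarrow> 'a \<Rightarrow> 'm \<Rightarrow> 'm) \<Rightarrow> 'a \<Rightarrow> bool" where
  "lower_semicontinuous_at M F p \<longleftrightarrow>
     bij_betw (lower_canon F p) (lower_colim M F p) (carrier (M p))"

lemma lower_semicontinuous_iff_at: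
  "lower_semicontinuous M F \<longleftrightarrow> (\<forall>p. lower_semicontinuous_at M F p)"
  by (simp add: lower_semicontinuous_def lower_semicontinuous_at_def)

context
  fixes k :: "'k ring" and I :: "'a::order set" and p u :: 'a and b :: bool
  assumes convex: "order_convex I"
    and zero_closed: "\<zero>\<^bsub>k\<^esub> \<in> carrier k"
    and directed_below: "directed {x. x \<lless> p}"
    and u_below: "u \<lless> p"
    and settles_below: "\<And>z. z \<lless> p \<Longrightarrow> u \<le> z \<Longrightarrow> z \<in> I \<longleftrightarrow> b"
begin

lemma indicator_map_germ:
  assumes "(x, m) \<in> lower_pairs (indicator_module k I) p" "x \<le> z" "u \<le> z" "z \<lless> p"
  shows "indicator_map k I x z m = (if b then m else \<zero>\<^bsub>k\<^esub>)"
  using assms settles_below[of z]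
  by (auto simp: lower_pairs_def indicator_map_apply carrier_indicator_module)

lemma lower_rel_indicator_eq:
  "lower_rel (indicator_module k I) (indicator_map k I) p =
     {(a, c). a \<in> lower_pairs (indicator_module k I) p \<and>
        c \<in> lower_pairs (indicator_module k I) p \<and>
        (if b then snd a else \<zero>\<^bsub>k\<^esub>) = (if b then snd c else \<zero>\<^bsub>k\<^esub>)}"
    (is "?rel = ?ker")
proof (intro Set.set_eqI iffI)
  fix ac assume "ac \<in> ?rel"
  then obtain x m y n z where ac: "ac = ((x, m), (y, n))"
    and pairs: "(x, m) \<in> lower_pairs (indicator_module k I) p"
      "(y, n) \<in> lower_pairs (indicator_module k I) p"
    and z: "z \<lless> p" "x \<le> z" "y \<le> z"
    and eq: "indicator_map k I x z m = indicator_map k I y z n"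
    unfolding lower_rel_def by blast
  obtain z' where z': "z' \<lless> p" "z \<le> z'" "u \<le> z'"
    using directed_below z(1) u_below by (auto simp: directed_def)
  have "(if b then m else \<zero>\<^bsub>k\<^esub>) = indicator_map k I x z' m"
    using indicator_map_germ[OF pairs(1) order_trans[OF z(2) z'(2)] z'(3,1)] by simp
  also have "\<dots> = indicator_map k I z z' (indicator_map k I x z m)"
    by (rule indicator_map_comp[OF convex z(2) z'(2), symmetric])
  also have "\<dots> = indicator_map k I z z' (indicator_map k I y z n)"
    by (simp only: eq)
  also have "\<dots> = indicator_map k I y z' n"
    by (rule indicator_map_comp[OF convex z(3) z'(2)])
  also have "\<dots> = (if b then n else \<zero>\<^bsub>k\<^esub>)"
    using indicator_map_germ[OF pairs(2) order_trans[OF z(3) z'(2)] z'(3,1)] by simp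
  finally show "ac \<in> ?ker" using ac pairs by (simp split: if_splits)
next
  fix ac assume "ac \<in> ?ker"
  moreover obtain x m y n where ac: "ac = ((x, m), (y, n))" by (metis prod.collapse)
  ultimately have pairs: "(x, m) \<in> lower_pairs (indicator_module k I) p"
      "(y, n) \<in> lower_pairs (indicator_module k I) p"
    and germs: "(if b then m else \<zero>\<^bsub>k\<^esub>) = (if b then n else \<zero>\<^bsub>k\<^esub>)"
    by (simp_all only: mem_Collect_eq case_prod_conv snd_conv)
  obtain z where z: "z \<lless> p" "x \<le> z" "y \<le> z" "u \<le> z"
    using directed_upper_bound3[OF directed_below, of x y u] pairs u_below by (auto simp: lower_pairs_def)
  have "indicator_map k I x z m = indicator_map k I y z n"
    using indicator_map_germ[OF pairs(1)] indicator_map_germ[OF pairs(2)] z germs by simp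
  then show "ac \<in> ?rel" using ac pairs z unfolding lower_rel_def by blast
qed

lemma indicator_map_to_point:
  assumes "(x, m) \<in> lower_pairs (indicator_module k I) p"
  shows "indicator_map k I x p m = (if p \<in> I then (if b then m else \<zero>\<^bsub>k\<^esub>) else \<zero>\<^bsub>k\<^esub>)"
proof -
  obtain z where z: "z \<lless> p" "x \<le> z" "u \<le> z"
    using directed_upper_bound3[OF directed_below, of x u u] assms u_below by (auto simp: lower_pairs_def)
  have "indicator_map k I x p m = indicator_map k I z p (indicator_map k I x z m)"
    by (rule indicator_map_comp[OF convex z(2) way_below_imp_le[OF z(1)], symmetric])
  also have "\<dots> = indicator_map k I z p (if b then m else \<zero>\<^bsub>k\<^esub>)"
    using indicator_map_germ[OF assms z(2,3,1)] by simp
  finally show ?thesis using settles_below[OF z(1,3)] by (auto simp: indicator_map_apply)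
qed

lemma lower_germs_eq:
  "(\<lambda>a. if b then snd a else \<zero>\<^bsub>k\<^esub>) ` lower_pairs (indicator_module k I) p =
     (if b then carrier k else {\<zero>\<^bsub>k\<^esub>})"
proof -
  have "u \<in> I \<longleftrightarrow> b" using settles_below[OF u_below] by simp
  then have "(u, m) \<in> lower_pairs (indicator_module k I) p" if "m \<in> carrier k" "b \<or> m = \<zero>\<^bsub>k\<^esub>" for m
    using that u_below zero_closed by (auto simp: lower_pairs_def carrier_indicator_module)
  moreover have "m \<in> carrier k" if "(x, m) \<in> lower_pairs (indicator_module k I) p" for x m
    using that zero_closed by (auto simp: lower_pairs_def carrier_indicator_module split: if_splits)
  ultimately show ?thesis using zero_closed by (force simp: image_iff)
qed

lemma lower_semicontinuous_at_indicator_iff: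
  assumes "\<one>\<^bsub>k\<^esub> \<in> carrier k" "\<one>\<^bsub>k\<^esub> \<noteq> \<zero>\<^bsub>k\<^esub>"
  shows "lower_semicontinuous_at (indicator_module k I) (indicator_map k I) p \<longleftrightarrow> (p \<in> I \<longleftrightarrow> b)"
proof -
  have "lower_semicontinuous_at (indicator_module k I) (indicator_map k I) p \<longleftrightarrow>
      bij_betw (\<lambda>m. if p \<in> I then m else \<zero>\<^bsub>k\<^esub>)
        ((\<lambda>a. if b then snd a else \<zero>\<^bsub>k\<^esub>) ` lower_pairs (indicator_module k I) p)
        (carrier (indicator_module k I p))"
    unfolding lower_semicontinuous_at_def lower_colim_def lower_canon_def
    by (rule bij_betw_the_elem_quotient_iff[OF lower_rel_indicator_eq])
       (auto simp: indicator_map_to_point)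
  then show ?thesis
    using bij_betw_if_zero_iff[OF zero_closed assms]
    by (simp only: lower_germs_eq carrier_indicator_module)
qed

end

definition upper_semicontinuous_at ::
  "('a::ord \<Rightarrow> ('k, 'm) module) \<Rightarrow> ('a \<Rightarrow> 'a \<Rightarrow> 'm \<Rightarrow> 'm) \<Rightarrow> 'a \<Rightarrow> bool" where
  "upper_semicontinuous_at M F p \<longleftrightarrow>
     bij_betw (upper_canon F p) (carrier (M p)) (upper_lim M F p)"

lemma upper_semicontinuous_iff_at:
  "upper_semicontinuous M F \<longleftrightarrow> (\<forall>p. upper_semicontinuous_at M F p)"
  by (simp add: upper_semicontinuous_def upper_semicontinuous_at_def)

definition indicator_section :: "'k ring \<Rightarrow> 'a::ord set \<Rightarrow> 'a \<Rightarrow> 'k \<Rightarrow> 'a \<Rightarrow> 'k" where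
  "indicator_section k I p m x = (if p \<lless> x then if x \<in> I then m else \<zero>\<^bsub>k\<^esub> else undefined)"

context
  fixes k :: "'k ring" and I :: "'a::order set" and p u :: 'a and b :: bool
  assumes convex: "order_convex I"
    and zero_closed: "\<zero>\<^bsub>k\<^esub> \<in> carrier k"
    and codirected_above: "\<And>x y. p \<lless> x \<Longrightarrow> p \<lless> y \<Longrightarrow> \<exists>z. p \<lless> z \<and> z \<le> x \<and> z \<le> y"
    and u_above: "p \<lless> u"
    and settles_above: "\<And>z. p \<lless> z \<Longrightarrow> z \<le> u \<Longrightarrow> z \<in> I \<longleftrightarrow> b"
begin

lemma upper_lim_indicator_eq:
  "upper_lim (indicator_module k I) (indicator_map k I) p =
     indicator_section k I p ` (if b then carrier k else {\<zero>\<^bsub>k\<^esub>})"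
proof (intro equalityI subsetI)
  fix s assume s: "s \<in> upper_lim (indicator_module k I) (indicator_map k I) p"
  have "s x = indicator_section k I p (s u) x" for x
  proof (cases "p \<lless> x")
    case True
    then obtain z where z: "p \<lless> z" "z \<le> x" "z \<le> u" using codirected_above[OF _ u_above] by blast
    have "s x = indicator_map k I z x (s z)" "s u = indicator_map k I z u (s z)"
      using s z True u_above by (auto simp: upper_lim_def)
    moreover have "z \<in> I \<longleftrightarrow> b" "u \<in> I \<longleftrightarrow> b"
      using settles_above z u_above by auto
    ultimately show ?thesis using True by (auto simp: indicator_section_def indicator_map_apply)
  next
    case False
    then show ?thesis using s by (simp add: upper_lim_def indicator_section_def)
  qed
  then have "s = indicator_section k I p (s u)" by (rule ext)
  moreover have "s u \<in> (if b then carrier k else {\<zero>\<^bsub>k\<^esub>})"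
    using s u_above settles_above[OF u_above order_refl]
    by (auto simp: upper_lim_def carrier_indicator_module)
  ultimately show "s \<in> indicator_section k I p ` (if b then carrier k else {\<zero>\<^bsub>k\<^esub>})"
    by (rule image_eqI)
next
  fix s assume "s \<in> indicator_section k I p ` (if b then carrier k else {\<zero>\<^bsub>k\<^esub>})"
  then obtain m where m: "m \<in> (if b then carrier k else {\<zero>\<^bsub>k\<^esub>})" "s = indicator_section k I p m"
    by auto
  have "m = \<zero>\<^bsub>k\<^esub>" if xy: "p \<lless> x" "x \<le> y" "x \<notin> I" "y \<in> I" for x y
  proof (cases b)
    case True
    obtain z where "p \<lless> z" "z \<le> x" "z \<le> u" using codirected_above[OF xy(1) u_above] by blast
    then have "z \<in> I" using settles_above True by blast
    then have "x \<in> I" using convex xy(2,4) \<open>z \<le> x\<close> unfolding order_convex_def by blast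
    then show ?thesis using xy(3) by contradiction
  next
    case False
    then show ?thesis using m(1) by simp
  qed
  then show "s \<in> upper_lim (indicator_module k I) (indicator_map k I) p"
    using m zero_closed
    by (auto simp: upper_lim_def indicator_section_def indicator_map_apply carrier_indicator_module
        split: if_splits)
qed

lemma upper_canon_indicator_eq:
  "upper_canon (indicator_map k I) p = (\<lambda>m. indicator_section k I p (if p \<in> I then m else \<zero>\<^bsub>k\<^esub>))"
  by (auto simp: fun_eq_iff upper_canon_def indicator_section_def indicator_map_apply)

lemma inj_on_indicator_section:
  "inj_on (indicator_section k I p) (if b then carrier k else {\<zero>\<^bsub>k\<^esub>})"
proof (cases b)
  case True
  then have "indicator_section k I p m u = m" for m
    using u_above settles_above[OF u_above order_refl] by (simp add: indicator_section_def)
  then show ?thesis by (metis inj_onI)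
next
  case False
  then show ?thesis by simp
qed

lemma upper_semicontinuous_at_indicator_iff:
  assumes "\<one>\<^bsub>k\<^esub> \<in> carrier k" "\<one>\<^bsub>k\<^esub> \<noteq> \<zero>\<^bsub>k\<^esub>"
  shows "upper_semicontinuous_at (indicator_module k I) (indicator_map k I) p \<longleftrightarrow> (p \<in> I \<longleftrightarrow> b)"
  unfolding upper_semicontinuous_at_def upper_lim_indicator_eq upper_canon_indicator_eq
    carrier_indicator_module
  by (rule bij_betw_comp_if_zero_iff[OF zero_closed assms inj_on_indicator_section])

end

lemma lower_semicontinuous_up_set_iff:
  fixes U :: "'a::order set" and k :: "'k ring"
  assumes "ring k" "\<one>\<^bsub>k\<^esub> \<noteq> \<zero>\<^bsub>k\<^esub>"
    and cont: "continuous_poset TYPE('a)" and up: "up_set U"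
  shows "lower_semicontinuous (indicator_module k U) (indicator_map k U) \<longleftrightarrow> scott_open U"
proof -
  interpret ring k by fact
  have "lower_semicontinuous_at (indicator_module k U) (indicator_map k U) p \<longleftrightarrow>
      (p \<in> U \<longrightarrow> (\<exists>v. v \<lless> p \<and> v \<in> U))" for p
  proof -
    let ?b = "\<exists>v. v \<lless> p \<and> v \<in> U"
    have dir: "directed {x. x \<lless> p}" using cont by (simp add: continuous_poset_def)
    then obtain u where u: "u \<lless> p" "?b \<Longrightarrow> u \<in> U" by (auto simp: directed_def)
    have settles: "z \<in> U \<longleftrightarrow> ?b" if "z \<lless> p" "u \<le> z" for z
      using that u up by (auto simp: up_set_def)
    have "lower_semicontinuous_at (indicator_module k U) (indicator_map k U) p \<longleftrightarrow> (p \<in> U \<longleftrightarrow> ?b)"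
      by (rule lower_semicontinuous_at_indicator_iff
          [OF up_set_imp_order_convex[OF up] zero_closed dir u(1) settles one_closed assms(2)])
    moreover have "?b \<Longrightarrow> p \<in> U" using up way_below_imp_le by (auto simp: up_set_def)
    ultimately show ?thesis by blast
  qed
  then show ?thesis by (simp add: lower_semicontinuous_iff_at scott_open_iff_way_below[OF cont up] Ball_def)
qed

lemma lower_semicontinuous_down_set_iff:
  fixes D :: "'a::order set" and k :: "'k ring"
  assumes "ring k" "\<one>\<^bsub>k\<^esub> \<noteq> \<zero>\<^bsub>k\<^esub>"
    and cont: "continuous_poset TYPE('a)" and down: "down_set D"
  shows "lower_semicontinuous (indicator_module k D) (indicator_map k D) \<longleftrightarrow> scott_closed D"
proof -
  interpret ring k by fact
  have up: "up_set (- D)" using down by (auto simp: up_set_def down_set_def)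
  have "lower_semicontinuous_at (indicator_module k D) (indicator_map k D) p \<longleftrightarrow>
      (p \<in> - D \<longrightarrow> (\<exists>v. v \<lless> p \<and> v \<in> - D))" for p
  proof -
    let ?b = "\<forall>v. v \<lless> p \<longrightarrow> v \<in> D"
    have dir: "directed {x. x \<lless> p}" using cont by (simp add: continuous_poset_def)
    then obtain u where u: "u \<lless> p" "\<not> ?b \<Longrightarrow> u \<notin> D" by (auto simp: directed_def)
    have settles: "z \<in> D \<longleftrightarrow> ?b" if "z \<lless> p" "u \<le> z" for z
      using that u down by (auto simp: down_set_def)
    have "lower_semicontinuous_at (indicator_module k D) (indicator_map k D) p \<longleftrightarrow> (p \<in> D \<longleftrightarrow> ?b)"
      by (rule lower_semicontinuous_at_indicator_iff
          [OF down_set_imp_order_convex[OF down] zero_closed dir u(1) settles one_closed assms(2)])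
    moreover have "p \<in> D \<Longrightarrow> ?b" using down way_below_imp_le by (auto simp: down_set_def)
    ultimately show ?thesis by blast
  qed
  then show ?thesis
    by (simp add: lower_semicontinuous_iff_at scott_closed_def scott_open_iff_way_below[OF cont up] Ball_def)
qed

lemma is_sup_vec_nth_approx:
  fixes D :: "(real^'n) set"
  assumes sup: "is_sup D s" and "a < s $ i"
  shows "\<exists>d\<in>D. a < d $ i"
proof (rule ccontr)
  assume "\<not> (\<exists>d\<in>D. a < d $ i)"
  then have le: "d $ i \<le> a" if "d \<in> D" for d using that by force
  define t :: "real^'n" where "t = (\<chi> j. if j = i then a else s $ j)"
  have "d \<le> t" if "d \<in> D" for d
    using le[OF that] sup that by (auto simp: is_sup_def t_def less_eq_vec_def)
  then have "s \<le> t" using sup by (auto simp: is_sup_def)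
  then have "s $ i \<le> t $ i" by (simp add: less_eq_vec_def)
  then have "s $ i \<le> a" by (simp add: t_def)
  then show False using \<open>a < s $ i\<close> by simp
qed

lemma directed_vec_strictly_below: "directed {z::real^'n. \<forall>i. z $ i < y $ i}" (is "directed ?S")
proof -
  have "(\<chi> i. y $ i - 1) \<in> ?S" by simp
  moreover have "(\<chi> i. max (a $ i) (b $ i)) \<in> ?S \<and> a \<le> (\<chi> i. max (a $ i) (b $ i)) \<and>
      b \<le> (\<chi> i. max (a $ i) (b $ i))" if "a \<in> ?S" "b \<in> ?S" for a b
    using that by (simp add: less_eq_vec_def)
  ultimately show ?thesis unfolding directed_def by blast
qed

lemma is_sup_vec_strictly_below: "is_sup {z::real^'n. \<forall>i. z $ i < y $ i} y"
  unfolding is_sup_def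
proof (intro conjI allI impI ballI)
  show "d \<le> y" if "d \<in> {z. \<forall>i. z $ i < y $ i}" for d
    using that by (auto simp: less_eq_vec_def less_imp_le)
  fix u :: "real^'n" assume ub: "\<forall>d\<in>{z. \<forall>i. z $ i < y $ i}. d \<le> u"
  show "y \<le> u" unfolding less_eq_vec_def
  proof (rule allI, rule ccontr)
    fix i assume "\<not> y $ i \<le> u $ i"
    define z :: "real^'n" where "z = (\<chi> j. if j = i then (u $ i + y $ i) / 2 else y $ j - 1)"
    have "z \<in> {z. \<forall>i. z $ i < y $ i}" using \<open>\<not> y $ i \<le> u $ i\<close> by (simp add: z_def)
    then have "z $ i \<le> u $ i" using ub by (auto simp: less_eq_vec_def)
    then show False using \<open>\<not> y $ i \<le> u $ i\<close> by (simp add: z_def)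
  qed
qed

lemma vec_way_below_iff: "(x::real^'n) \<lless> y \<longleftrightarrow> (\<forall>i. x $ i < y $ i)"
proof
  assume "x \<lless> y"
  then obtain d where "\<forall>i. d $ i < y $ i" "x \<le> d"
    using directed_vec_strictly_below is_sup_vec_strictly_below unfolding way_below_def by blast
  then show "\<forall>i. x $ i < y $ i" by (auto simp: less_eq_vec_def intro: le_less_trans)
next
  assume lt: "\<forall>i. x $ i < y $ i"
  show "x \<lless> y" unfolding way_below_def
  proof (intro allI impI)
    fix D s assume H: "directed D \<and> is_sup D s \<and> y \<le> s"
    have "\<exists>d\<in>D. x $ i < d $ i" for i
      using is_sup_vec_nth_approx[of D s "x $ i" i] H lt
      by (meson less_eq_vec_def less_le_trans)
    then obtain g where g: "\<And>i. g i \<in> D" "\<And>i. x $ i < g i $ i" by metis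
    then obtain d where "d \<in> D" "\<And>i. g i \<le> d"
      using directed_finite_upper_bound[of D "range g"] H by auto
    then have "x \<le> d" using g(2) by (meson less_eq_vec_def less_imp_le order_trans)
    then show "\<exists>d\<in>D. x \<le> d" using \<open>d \<in> D\<close> by blast
  qed
qed

lemma vec_way_above_codirected:
  assumes "(p::real^'n) \<lless> x" "p \<lless> y"
  shows "\<exists>z. p \<lless> z \<and> z \<le> x \<and> z \<le> y"
proof (intro exI conjI)
  show "p \<lless> (\<chi> i. min (x $ i) (y $ i))" using assms by (simp add: vec_way_below_iff)
qed (simp_all add: less_eq_vec_def)

lemma vec_way_above_exists: "\<exists>x. (p::real^'n) \<lless> x"
  by (rule exI[of _ "\<chi> i. p $ i + 1"]) (simp add: vec_way_below_iff)

lemma open_down_set_iff_way_above: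
  fixes S :: "(real^'n) set"
  assumes down: "down_set S"
  shows "open S \<longleftrightarrow> (\<forall>p\<in>S. \<exists>x. p \<lless> x \<and> x \<in> S)"
proof
  assume "open S"
  show "\<forall>p\<in>S. \<exists>x. p \<lless> x \<and> x \<in> S"
  proof
    fix p assume "p \<in> S"
    then obtain e where e: "e > 0" "ball p e \<subseteq> S" using \<open>open S\<close> open_contains_ball by blast
    define t where "t = e / (2 * real CARD('n))"
    have t: "t > 0" using e by (simp add: t_def)
    define x :: "real^'n" where "x = (\<chi> i. p $ i + t)"
    have "norm (x - p) \<le> (\<Sum>i\<in>UNIV. \<bar>(x - p) $ i\<bar>)" by (rule norm_le_l1_cart)
    also have "\<dots> = real CARD('n) * t" using t by (simp add: x_def)
    also have "\<dots> = e / 2" by (simp add: t_def)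
    finally have "x \<in> S" using e by (auto simp: dist_norm norm_minus_commute)
    moreover have "p \<lless> x" using t by (simp add: vec_way_below_iff x_def)
    ultimately show "\<exists>x. p \<lless> x \<and> x \<in> S" by blast
  qed
next
  assume H: "\<forall>p\<in>S. \<exists>x. p \<lless> x \<and> x \<in> S"
  show "open S"
  proof (rule open_subopen[THEN iffD2], rule ballI)
    fix p assume "p \<in> S"
    then obtain x where "p \<lless> x" "x \<in> S" using H by blast
    define T where "T = (\<Inter>i. {y::real^'n. y $ i < x $ i})"
    have "open T" unfolding T_def by (intro open_INT) (auto simp: open_halfspace_component_lt_cart)
    moreover have "p \<in> T" using \<open>p \<lless> x\<close> by (simp add: T_def vec_way_below_iff)
    moreover have "T \<subseteq> S"
    proof
      fix y assume "y \<in> T"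
      then have "y \<le> x" by (auto simp: T_def less_eq_vec_def less_imp_le)
      then show "y \<in> S" using down \<open>x \<in> S\<close> by (auto simp: down_set_def)
    qed
    ultimately show "\<exists>T. open T \<and> p \<in> T \<and> T \<subseteq> S" by blast
  qed
qed

lemma upper_semicontinuous_up_set_iff:
  fixes V :: "(real^'n) set" and k :: "'k ring"
  assumes "ring k" "\<one>\<^bsub>k\<^esub> \<noteq> \<zero>\<^bsub>k\<^esub>" and up: "up_set V"
  shows "upper_semicontinuous (indicator_module k V) (indicator_map k V) \<longleftrightarrow> closed V"
proof -
  interpret ring k by fact
  have down: "down_set (- V)" using up by (auto simp: up_set_def down_set_def)
  have "upper_semicontinuous_at (indicator_module k V) (indicator_map k V) p \<longleftrightarrow>
      (p \<in> - V \<longrightarrow> (\<exists>x. p \<lless> x \<and> x \<in> - V))" for p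
  proof -
    let ?b = "\<forall>x. p \<lless> x \<longrightarrow> x \<in> V"
    obtain u where u: "p \<lless> u" "\<not> ?b \<Longrightarrow> u \<notin> V" using vec_way_above_exists by blast
    have settles: "z \<in> V \<longleftrightarrow> ?b" if "p \<lless> z" "z \<le> u" for z
      using that u up by (auto simp: up_set_def)
    have "upper_semicontinuous_at (indicator_module k V) (indicator_map k V) p \<longleftrightarrow> (p \<in> V \<longleftrightarrow> ?b)"
      using vec_way_above_codirected
      by (rule upper_semicontinuous_at_indicator_iff[OF up_set_imp_order_convex[OF up] zero_closed
          _ u(1) settles one_closed assms(2)])
    moreover have "p \<in> V \<Longrightarrow> ?b" using up way_below_imp_le by (auto simp: up_set_def)
    ultimately show ?thesis by blast
  qed
  then show ?thesis
    by (simp add: upper_semicontinuous_iff_at closed_def open_down_set_iff_way_above[OF down] Ball_def)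
qed

lemma upper_semicontinuous_down_set_iff:
  fixes E :: "(real^'n) set" and k :: "'k ring"
  assumes "ring k" "\<one>\<^bsub>k\<^esub> \<noteq> \<zero>\<^bsub>k\<^esub>" and down: "down_set E"
  shows "upper_semicontinuous (indicator_module k E) (indicator_map k E) \<longleftrightarrow> open E"
proof -
  interpret ring k by fact
  have "upper_semicontinuous_at (indicator_module k E) (indicator_map k E) p \<longleftrightarrow>
      (p \<in> E \<longrightarrow> (\<exists>x. p \<lless> x \<and> x \<in> E))" for p
  proof -
    let ?b = "\<exists>x. p \<lless> x \<and> x \<in> E"
    obtain u where u: "p \<lless> u" "?b \<Longrightarrow> u \<in> E" using vec_way_above_exists by blast
    have settles: "z \<in> E \<longleftrightarrow> ?b" if "p \<lless> z" "z \<le> u" for z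
      using that u down by (auto simp: down_set_def)
    have "upper_semicontinuous_at (indicator_module k E) (indicator_map k E) p \<longleftrightarrow> (p \<in> E \<longleftrightarrow> ?b)"
      using vec_way_above_codirected
      by (rule upper_semicontinuous_at_indicator_iff[OF down_set_imp_order_convex[OF down] zero_closed
          _ u(1) settles one_closed assms(2)])
    moreover have "?b \<Longrightarrow> p \<in> E" using down way_below_imp_le by (auto simp: down_set_def)
    ultimately show ?thesis by blast
  qed
  then show ?thesis
    by (simp add: upper_semicontinuous_iff_at open_down_set_iff_way_above[OF down] Ball_def)
qed

theorem mainTheorem9:
  fixes k :: "'k ring" and U D :: "'a::order set"
  assumes "cring k" and "\<one>\<^bsub>k\<^esub> \<noteq> \<zero>\<^bsub>k\<^esub>"
    and "continuous_poset TYPE('a)"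
    and "up_set U" and "down_set D"
  shows "(lower_semicontinuous (indicator_module k U) (indicator_map k U) \<longleftrightarrow> scott_open U)
    \<and> (lower_semicontinuous (indicator_module k D) (indicator_map k D) \<longleftrightarrow> scott_closed D)
    \<and> (\<forall>V :: (real ^ 'n) set. up_set V \<longrightarrow>
         (upper_semicontinuous (indicator_module k V) (indicator_map k V) \<longleftrightarrow> closed V))
    \<and> (\<forall>E :: (real ^ 'n) set. down_set E \<longrightarrow>
         (upper_semicontinuous (indicator_module k E) (indicator_map k E) \<longleftrightarrow> open E))"
proof -
  have ring: "ring k" using \<open>cring k\<close> by (rule cring.axioms(1))
  show ?thesis
    using lower_semicontinuous_up_set_iff[OF ring assms(2,3,4)]
      lower_semicontinuous_down_set_iff[OF ring assms(2,3,5)]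
      upper_semicontinuous_up_set_iff[OF ring assms(2)]
      upper_semicontinuous_down_set_iff[OF ring assms(2)]
    by blast
qed

end
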